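(* Let $S=\{s_1<\dots<s_{k_1}\}$ and $T=\{t_1<\dots<t_{k_2}\}$ be nonempty subsets of $\{1,\dots,n-1\}$, let $d=\gcd\{s+t: s\in S,t\in T\}$ and $d'=\gcd(s_1,d)$. For a positive integer $i$ let $P_i=\{\ell\in\mathcal{I}_n : \ell\equiv is_1\pmod d\}$, where $\mathcal{I}_n=\{-n+1,\dots,n-1\}$ (integers). Then for every positive integer $i$: (a) $P_i=P_{i+d/d'}$; (b) $P_i,\dots,P_{i-1+d/d'}$ are mutually disjoint; (c) if $i\ge2$, then $P_i=\{\ell\in\mathcal{I}_n : \ell-s_1\in P_{i-1}\text{ or }\ell+t_1\in P_{i-1}\}$. *)

theory Defs
  imports Main "HOL-Number_Theory.Cong"
begin

definition I_n :: "nat \<Rightarrow> int set" where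
  "I_n n = {-int n + 1 .. int n - 1}"

definition P_set :: "nat \<Rightarrow> nat \<Rightarrow> nat \<Rightarrow> nat \<Rightarrow> int set" where
  "P_set n d s1 i = {l \<in> I_n n. [l = int i * int s1] (mod int d)}"

end

theory Submission
  imports Defs
begin

text \<open>
  Since \<open>s\<^sub>1 + t\<^sub>1\<close> is one of the sums \<open>s + t\<close>, we have \<open>t\<^sub>1 \<equiv> -s\<^sub>1 (mod d)\<close>, so shifting
  by \<open>-s\<^sub>1\<close> or by \<open>+t\<^sub>1\<close> moves the residue class \<open>i s\<^sub>1\<close> to the same class \<open>(i - 1) s\<^sub>1\<close>,
  and from any point of \<open>I\<^sub>n\<close> at least one of the two shifts stays in \<open>I\<^sub>n\<close>.
  Cancelling \<open>s\<^sub>1\<close> in \<open>i s\<^sub>1 \<equiv> j s\<^sub>1 (mod d)\<close> gives \<open>i \<equiv> j (mod d/d')\<close>, which yields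
  periodicity and disjointness.
\<close>

lemma cong_mult_right_iff_cong_div_gcd:
  fixes a b s d :: "'a::{unique_euclidean_ring, ring_gcd}"
  assumes "d \<noteq> 0"
  shows "[a * s = b * s] (mod d) \<longleftrightarrow> [a = b] (mod d div gcd s d)"
proof -
  define g where "g = gcd s d"
  define s' d' where "s' = s div g" and "d' = d div g"
  have "g \<noteq> 0" using assms by (simp add: g_def)
  have s: "s = s' * g" and d: "d = d' * g"
    by (simp_all add: g_def s'_def d'_def)
  have "coprime s' d'"
    using assms by (simp add: g_def s'_def d'_def div_gcd_coprime)
  have "[a * s = b * s] (mod d) \<longleftrightarrow> d' * g dvd (a - b) * s' * g"
    by (simp only: cong_iff_dvd_diff s d left_diff_distrib mult.assoc)
  also have "\<dots> \<longleftrightarrow> d' dvd (a - b) * s'"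
    using \<open>g \<noteq> 0\<close> by (rule dvd_times_right_cancel_iff)
  also have "\<dots> \<longleftrightarrow> d' dvd a - b"
    using \<open>coprime s' d'\<close> by (simp add: coprime_commute coprime_dvd_mult_left_iff)
  finally show ?thesis by (simp add: g_def d'_def cong_iff_dvd_diff)
qed

lemma cong_imp_eq_window:
  fixes i j k m :: nat
  assumes "[j = k] (mod m)" "i \<le> j" "j < i + m" "i \<le> k" "k < i + m"
  shows "j = k"
proof -
  have "[j - i + i = k - i + i] (mod m)" using assms by simp
  then have "[j - i = k - i] (mod m)" by (simp only: cong_add_rcancel_nat)
  then have "j - i = k - i" using assms by (intro cong_less_imp_eq_nat) auto
  then show ?thesis using assms by simp
qed

lemma P_set_index_cong_iff:
  assumes "0 < d"
  shows "[int j * int s = int k * int s] (mod int d) \<longleftrightarrow> [j = k] (mod d div gcd s d)"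
proof -
  have "int d div gcd (int s) (int d) = int (d div gcd s d)"
    by (simp add: of_nat_div)
  then show ?thesis
    using assms by (simp add: cong_mult_right_iff_cong_div_gcd cong_int_iff)
qed

lemma P_set_eq_if_index_cong:
  assumes "0 < d" "[j = k] (mod d div gcd s d)"
  shows "P_set n d s j = P_set n d s k"
proof -
  have "[int j * int s = int k * int s] (mod int d)"
    using assms by (simp add: P_set_index_cong_iff)
  then show ?thesis
    unfolding P_set_def by (meson cong_sym cong_trans)
qed

lemma P_set_add_period:
  assumes "0 < d"
  shows "P_set n d s (i + d div gcd s d) = P_set n d s i"
  using assms by (intro P_set_eq_if_index_cong) (simp_all add: cong_def)

lemma P_set_disjoint_if_not_index_cong:
  assumes "0 < d" "\<not> [j = k] (mod d div gcd s d)"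
  shows "P_set n d s j \<inter> P_set n d s k = {}"
proof -
  have "\<not> [int j * int s = int k * int s] (mod int d)"
    using assms by (simp add: P_set_index_cong_iff)
  then show ?thesis
    unfolding P_set_def by (auto dest: cong_sym cong_trans)
qed

lemma P_set_Suc:
  assumes "d dvd s + t" "s < n" "t < n"
  shows "P_set n d s (Suc i) =
    {l \<in> I_n n. l - int s \<in> P_set n d s i \<or> l + int t \<in> P_set n d s i}"
proof -
  have "int d dvd int s + int t"
    using assms(1) by (simp flip: of_nat_add)
  then have shift_t: "[l + int t = int i * int s] (mod int d) \<longleftrightarrow> [l = int (Suc i) * int s] (mod int d)"
    for l
    using dvd_add_left_iff[of "int d" "int s + int t" "l - int (Suc i) * int s"]
    by (simp add: cong_iff_dvd_diff algebra_simps)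
  have shift_s: "[l - int s = int i * int s] (mod int d) \<longleftrightarrow> [l = int (Suc i) * int s] (mod int d)"
    for l
    by (simp add: cong_iff_dvd_diff algebra_simps)
  have "l - int s \<in> I_n n \<or> l + int t \<in> I_n n" if "l \<in> I_n n" for l
    using that assms(2,3) by (auto simp: I_n_def)
  then show ?thesis
    by (auto simp: P_set_def shift_s shift_t)
qed

theorem lemma2p8:
  fixes n :: nat and S T :: "nat set"
  assumes "S \<noteq> {}" "T \<noteq> {}" "S \<subseteq> {1..n-1}" "T \<subseteq> {1..n-1}"
  defines "d \<equiv> Gcd {s + t | s t. s \<in> S \<and> t \<in> T}"
      and "s1 \<equiv> Min S" and "t1 \<equiv> Min T"
  defines "d' \<equiv> gcd s1 d"
  defines "P \<equiv> P_set n d s1"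
  shows "\<forall>i\<ge>1.
           P i = P (i + d div d') \<and>
           (\<forall>j\<in>{i..i - 1 + d div d'}. \<forall>k\<in>{i..i - 1 + d div d'}. j \<noteq> k \<longrightarrow> P j \<inter> P k = {}) \<and>
           (i \<ge> 2 \<longrightarrow> P i = {l \<in> I_n n. l - int s1 \<in> P (i - 1) \<or> l + int t1 \<in> P (i - 1)})"
proof -
  have "finite S" "finite T"
    using assms(3,4) by (auto intro: finite_subset)
  then have "s1 \<in> S" "t1 \<in> T"
    using assms(1,2) by (simp_all add: s1_def t1_def)
  then have "0 < s1" "s1 < n" "t1 < n"
    using assms(3,4) by (auto dest!: subsetD)
  have "d dvd s1 + t1"
    unfolding d_def using \<open>s1 \<in> S\<close> \<open>t1 \<in> T\<close> by (intro Gcd_dvd) blast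
  then have "0 < d"
    using \<open>0 < s1\<close> by (intro gr0I) simp
  show ?thesis
  proof (intro allI impI conjI)
    fix i :: nat
    assume "1 \<le> i"
    show "P i = P (i + d div d')"
      unfolding P_def d'_def using P_set_add_period[OF \<open>0 < d\<close>] by simp
    show "\<forall>j\<in>{i..i - 1 + d div d'}. \<forall>k\<in>{i..i - 1 + d div d'}. j \<noteq> k \<longrightarrow> P j \<inter> P k = {}"
    proof (intro ballI impI)
      fix j k
      assume window: "j \<in> {i..i - 1 + d div d'}" "k \<in> {i..i - 1 + d div d'}" and "j \<noteq> k"
      have "j < i + d div d'" "k < i + d div d'"
        using window \<open>1 \<le> i\<close> by auto
      then have "\<not> [j = k] (mod d div d')"
        using window \<open>j \<noteq> k\<close> cong_imp_eq_window[of j k "d div d'" i] by (meson atLeastAtMost_iff)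
      then show "P j \<inter> P k = {}"
        unfolding P_def d'_def using \<open>0 < d\<close> by (rule P_set_disjoint_if_not_index_cong[rotated])
    qed
    assume "2 \<le> i"
    then show "P i = {l \<in> I_n n. l - int s1 \<in> P (i - 1) \<or> l + int t1 \<in> P (i - 1)}"
      unfolding P_def using P_set_Suc[OF \<open>d dvd s1 + t1\<close> \<open>s1 < n\<close> \<open>t1 < n\<close>, of "i - 1"]
      by (simp add: Suc_diff_Suc numeral_2_eq_2)
  qed
qed

end
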